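(* Let $k_0\ge1$, $(\pi^0,P^0)\in\Theta^{k_0}$, and for each $n$ let $\mathbf x_{n\times n}$ be the network part of a sample of size $n$ from the SBM with parameters $(\pi^0,P^0)$, this SBM having order $k_0$. Then $\hat k_{\mathrm{KT}}(\mathbf x_{n\times n})\notin(n,\infty)$ eventually almost surely as $n\to\infty$.
   Context: An adjacency matrix on $n$ nodes is a symmetric $\mathbf{x}\in\{0,1\}^{n\times n}$ with zero diagonal. For $k\ge1$ let $\Theta^k=\{(\pi,P):\pi\in(0,1]^k,\ \sum_{a=1}^k\pi_a=1,\ P\in[0,1]^{k\times k}\text{ symmetric}\}$, $[k]=\{1,\dots,k\}$. For $(\pi,P)\in\Theta^k$ the SBM is the law of $(\mathbf Z_n,\mathbf X_{n\times n})$, $\mathbf Z_n\in[k]^n$, with $\mathbb P_{\pi,P}(\mathbf z_n,\mathbf x)=\prod_{a=1}^k\pi_a^{n_a}\prod_{a,b=1}^kP_{a,b}^{O_{a,b}/2}(1-P_{a,b})^{(n_{a,b}-O_{a,b})/2}$ ($0^0=1$), $n_a=\sum_i 1\{z_i=a\}$, $n_{a,b}=n_an_b$ ($a\ne b$), $n_{a,a}=n_a(n_a-1)$, $O_{a,b}=\sum_{i,j}1\{z_i=a,z_j=b\}x_{ij}$; $\mathbb P_{\pi,P}(\mathbf x)=\sum_{\mathbf z_n\in[k]^n}\mathbb P_{\pi,P}(\mathbf z_n,\mathbf x)$. The order of an SBM is the smallest $k$ for which its law can be written in this form with parameters in $\Theta^k$. KT prior: $\nu_k(\pi,P)=\Big[\frac{\Gamma(k/2)}{\Gamma(1/2)^k}\prod_{a}\pi_a^{-1/2}\Big]\Big[\prod_{1\le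 a\le b\le k}\frac{1}{\Gamma(1/2)^2}P_{a,b}^{-1/2}(1-P_{a,b})^{-1/2}\Big]$; $\mathrm{KT}_k(\mathbf x)=\int_{\Theta^k}\mathbb P_{\pi,P}(\mathbf x)\nu_k(\pi,P)\,d\pi\,dP$. Estimator: $\hat k_{\mathrm{KT}}(\mathbf x)=\arg\max_{k\ge1}\{\log\mathrm{KT}_k(\mathbf x)-\mathrm{pen}(k,n)\}$, $\mathrm{pen}(k,n)=\sum_{i=1}^{k-1}\frac{i(i+2)+3+\epsilon}{2}\log n$ for fixed $\epsilon>0$. "Eventually almost surely" means: with probability one, for all sufficiently large $n$. *)

theory Defs
  imports "HOL-Probability.Probability"
begin

text \<open>Power with the convention 0^0 = 1 (Isabelle's powr has 0 powr 0 = 0).\<close>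
definition pw :: "real \<Rightarrow> real \<Rightarrow> real" where
  "pw b e = (if e = 0 then 1 else b powr e)"

definition adj_matrix :: "nat \<Rightarrow> (nat \<Rightarrow> nat \<Rightarrow> bool) \<Rightarrow> bool" where
  "adj_matrix n x \<longleftrightarrow> (\<forall>i<n. \<forall>j<n. x i j = x j i) \<and> (\<forall>i<n. \<not> x i i)"

definition Theta :: "nat \<Rightarrow> ((nat \<Rightarrow> real) \<times> (nat \<Rightarrow> nat \<Rightarrow> real)) set" where
  "Theta k = {(\<pi>, P). (\<forall>a\<in>{1..k}. 0 < \<pi> a \<and> \<pi> a \<le> 1) \<and> (\<Sum>a\<in>{1..k}. \<pi> a) = 1 \<and>
      (\<forall>a\<in>{1..k}. \<forall>b\<in>{1..k}. 0 \<le> P a b \<and> P a b \<le> 1 \<and> P a b = P b a)}"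

definition cnt_n :: "nat \<Rightarrow> (nat \<Rightarrow> nat) \<Rightarrow> nat \<Rightarrow> nat" where
  "cnt_n n z a = card {i. i < n \<and> z i = a}"

definition cnt_nn :: "nat \<Rightarrow> (nat \<Rightarrow> nat) \<Rightarrow> nat \<Rightarrow> nat \<Rightarrow> nat" where
  "cnt_nn n z a b = (if a \<noteq> b then cnt_n n z a * cnt_n n z b
                     else cnt_n n z a * (cnt_n n z a - 1))"

definition cnt_O :: "nat \<Rightarrow> (nat \<Rightarrow> nat) \<Rightarrow> (nat \<Rightarrow> nat \<Rightarrow> bool) \<Rightarrow> nat \<Rightarrow> nat \<Rightarrow> nat" where
  "cnt_O n z x a b = card {(i, j). i < n \<and> j < n \<and> z i = a \<and> z j = b \<and> x i j}"

definition sbm_joint :: "nat \<Rightarrow> (nat \<Rightarrow> real) \<Rightarrow> (nat \<Rightarrow> nat \<Rightarrow> real) \<Rightarrow> nat \<Rightarrow>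
    (nat \<Rightarrow> nat) \<Rightarrow> (nat \<Rightarrow> nat \<Rightarrow> bool) \<Rightarrow> real" where
  "sbm_joint k \<pi> P n z x =
     (\<Prod>a\<in>{1..k}. \<pi> a ^ cnt_n n z a) *
     (\<Prod>a\<in>{1..k}. \<Prod>b\<in>{1..k}.
        pw (P a b) (real (cnt_O n z x a b) / 2) *
        pw (1 - P a b) ((real (cnt_nn n z a b) - real (cnt_O n z x a b)) / 2))"

definition sbm_prob :: "nat \<Rightarrow> (nat \<Rightarrow> real) \<Rightarrow> (nat \<Rightarrow> nat \<Rightarrow> real) \<Rightarrow> nat \<Rightarrow>
    (nat \<Rightarrow> nat \<Rightarrow> bool) \<Rightarrow> real" where
  "sbm_prob k \<pi> P n x = (\<Sum>z\<in>PiE {0..<n} (\<lambda>_. {1..k}). sbm_joint k \<pi> P n z x)"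

definition sbm_order :: "nat \<Rightarrow> (nat \<Rightarrow> real) \<Rightarrow> (nat \<Rightarrow> nat \<Rightarrow> real) \<Rightarrow> nat" where
  "sbm_order k \<pi> P = (LEAST k'. k' \<ge> 1 \<and> (\<exists>\<pi>' P'. (\<pi>', P') \<in> Theta k' \<and>
      (\<forall>n x. adj_matrix n x \<longrightarrow> sbm_prob k' \<pi>' P' n x = sbm_prob k \<pi> P n x)))"

text \<open>Coordinates for the KT integral: free simplex coordinates pi_1..pi_{k-1}
  (pi_k = 1 - sum), and P_{a,b} for 1 <= a <= b <= k.\<close>
definition upper_pairs :: "nat \<Rightarrow> (nat \<times> nat) set" where
  "upper_pairs k = {(a, b). 1 \<le> a \<and> a \<le> b \<and> b \<le> k}"

definition pi_of :: "nat \<Rightarrow> (nat \<Rightarrow> real) \<Rightarrow> nat \<Rightarrow> real" where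
  "pi_of k f a = (if a < k then f a else 1 - (\<Sum>c\<in>{1..<k}. f c))"

definition P_of :: "((nat \<times> nat) \<Rightarrow> real) \<Rightarrow> nat \<Rightarrow> nat \<Rightarrow> real" where
  "P_of g a b = g (min a b, max a b)"

definition KT_measure :: "nat \<Rightarrow> ((nat \<Rightarrow> real) \<times> ((nat \<times> nat) \<Rightarrow> real)) measure" where
  "KT_measure k = (PiM {1..<k} (\<lambda>_. lborel)) \<Otimes>\<^sub>M (PiM (upper_pairs k) (\<lambda>_. lborel))"

definition KT_prior :: "nat \<Rightarrow> (nat \<Rightarrow> real) \<Rightarrow> (nat \<Rightarrow> nat \<Rightarrow> real) \<Rightarrow> real" where
  "KT_prior k \<pi> P =
     (Gamma (real k / 2) / Gamma (1/2) ^ k * (\<Prod>a\<in>{1..k}. \<pi> a powr (-1/2))) *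
     (\<Prod>(a, b)\<in>upper_pairs k. 1 / Gamma (1/2) ^ 2 * P a b powr (-1/2) * (1 - P a b) powr (-1/2))"

definition KT :: "nat \<Rightarrow> nat \<Rightarrow> (nat \<Rightarrow> nat \<Rightarrow> bool) \<Rightarrow> real" where
  "KT k n x = enn2real (\<integral>\<^sup>+ y. ennreal
      (if (pi_of k (fst y), P_of (snd y)) \<in> Theta k
       then sbm_prob k (pi_of k (fst y)) (P_of (snd y)) n x * KT_prior k (pi_of k (fst y)) (P_of (snd y))
       else 0) \<partial>KT_measure k)"

definition pen :: "real \<Rightarrow> nat \<Rightarrow> nat \<Rightarrow> real" where
  "pen \<epsilon> k n = (\<Sum>i\<in>{1..<k}. (real (i * (i + 2)) + 3 + \<epsilon>) / 2 * ln (real n))"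

definition KT_crit :: "real \<Rightarrow> nat \<Rightarrow> (nat \<Rightarrow> nat \<Rightarrow> bool) \<Rightarrow> nat \<Rightarrow> real" where
  "KT_crit \<epsilon> n x k = ln (KT k n x) - pen \<epsilon> k n"

definition is_khat_KT :: "real \<Rightarrow> nat \<Rightarrow> (nat \<Rightarrow> nat \<Rightarrow> bool) \<Rightarrow> nat \<Rightarrow> bool" where
  "is_khat_KT \<epsilon> n x k = is_arg_max (KT_crit \<epsilon> n x) (\<lambda>k'. k' \<ge> 1) k"

end

(*
  Almost surely every observed matrix is an adjacency matrix: the SBM probabilities of
  the adjacency matrices on n nodes already sum to one.  For an adjacency matrix x and
  k > n the KT mixture is small: every joint likelihood is at most 1, so the marginal is
  at most k^n, and the prior integrates to Gamma(k/2)/Gamma(1/2)^k times a Dirichlet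
  integral that is at most pi 2^(k-2), since Beta(1/2,1/2) = pi.  Hence
  ln KT_k(x) <= 3 k^2, while the penalty is at least (k^2/2) ln n.  With one class,
  restricting the prior to P_11 in [1/4,3/4] gives KT_1(x) >= exp(-n^2-3), and the
  penalty vanishes.  So once ln n >= 16 no k > n maximises the criterion.
*)
theory Submission
  imports Defs
begin

lemma ln_le_of_le_exp:
  fixes x c :: real
  assumes "0 \<le> x" "x \<le> exp c" "0 \<le> c"
  shows "ln x \<le> c"
proof (cases "x = 0")
  case False
  then show ?thesis using ln_mono[of x "exp c"] assms by simp
qed (simp add: assms)

lemma exp_minus_2_le_quarter: "exp (-2) \<le> (1/4 :: real)"
proof -
  have "2 \<le> exp (1::real)" using exp_ge_add_one_self[of 1] by simp
  then have "2 * 2 \<le> exp (1::real) * exp 1" by (intro mult_mono) auto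
  then show ?thesis by (simp add: exp_minus field_simps flip: exp_add)
qed

lemma one_le_powr_minus_half:
  assumes "0 < t" "t \<le> (1::real)"
  shows "1 \<le> t powr (-1/2)"
proof -
  have "t powr (1/2) \<le> 1" "0 < t powr (1/2)" using assms by (auto intro: powr_le1)
  then show ?thesis by (simp add: powr_minus_divide)
qed

lemma pw_nonneg: "0 \<le> b \<Longrightarrow> 0 \<le> pw b e"
  by (simp add: pw_def)

lemma pw_le_1: "0 \<le> b \<Longrightarrow> b \<le> 1 \<Longrightarrow> 0 \<le> e \<Longrightarrow> pw b e \<le> 1"
  by (auto simp: pw_def powr_le1)

lemma exp_le_pw:
  assumes "exp (- c) \<le> q" and "0 \<le> e"
  shows "exp (- c * e) \<le> pw q e"
proof (cases "e = 0")
  case False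
  have "0 < q" using assms(1) exp_gt_zero[of "- c"] by linarith
  then have "- c \<le> ln q" using assms(1) by (simp add: ln_ge_iff)
  then have "e * (- c) \<le> e * ln q" using assms(2) by (rule mult_left_mono)
  then have "exp (- c * e) \<le> exp (e * ln q)" by (simp add: mult.commute)
  with \<open>0 < q\<close> False show ?thesis by (simp add: pw_def powr_def)
qed (simp add: pw_def)

lemma pw_half_square:
  assumes "0 \<le> q"
  shows "pw q (real m / 2) ^ 2 = q ^ m"
proof (cases "m = 0 \<or> q = 0")
  case False
  then have "0 < q" using assms by simp
  then have "(q powr (real m / 2)) ^ 2 = q powr (real m / 2 * 2)"
    by (simp add: powr_realpow[symmetric] powr_powr)
  also have "\<dots> = q ^ m" using \<open>0 < q\<close> by (simp add: powr_realpow)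
  finally show ?thesis using False by (simp add: pw_def)
qed (auto simp: pw_def)

lemma prod_power_card_fibers:
  assumes "finite S" "finite T" "g ` S \<subseteq> T"
  shows "(\<Prod>t\<in>T. h t ^ card {s \<in> S. g s = t}) = (\<Prod>s\<in>S. h (g s))"
proof -
  have "(\<Prod>t\<in>T. h t ^ card {s \<in> S. g s = t}) = (\<Prod>t\<in>T. \<Prod>s\<in>{s \<in> S. g s = t}. h (g s))"
    by (intro prod.cong) auto
  also have "\<dots> = (\<Prod>s\<in>S. h (g s))"
    using assms by (rule prod.group)
  finally show ?thesis .
qed

lemma nn_integral_pair_measure_times:
  assumes "sigma_finite_measure N" "f \<in> borel_measurable M" "g \<in> borel_measurable N"
  shows "(\<integral>\<^sup>+ y. f (fst y) * g (snd y) \<partial>(M \<Otimes>\<^sub>M N)) = (\<integral>\<^sup>+ u. f u \<partial>M) * (\<integral>\<^sup>+ v. g v \<partial>N)"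
proof -
  have meas: "(\<lambda>y. f (fst y) * g (snd y)) \<in> borel_measurable (M \<Otimes>\<^sub>M N)"
    using assms(2,3) by measurable
  have "(\<integral>\<^sup>+ y. f (fst y) * g (snd y) \<partial>(M \<Otimes>\<^sub>M N)) = (\<integral>\<^sup>+ u. \<integral>\<^sup>+ v. f u * g v \<partial>N \<partial>M)"
    using sigma_finite_measure.nn_integral_fst[OF assms(1) meas] by simp
  also have "\<dots> = (\<integral>\<^sup>+ u. f u * (\<integral>\<^sup>+ v. g v \<partial>N) \<partial>M)"
    using assms(3) by (simp add: nn_integral_cmult)
  also have "\<dots> = (\<integral>\<^sup>+ u. f u \<partial>M) * (\<integral>\<^sup>+ v. g v \<partial>N)"
    using assms(2) by (rule nn_integral_multc)
  finally show ?thesis .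
qed

section \<open>Arcsine and Dirichlet integrals\<close>

interpretation lborel_product: product_sigma_finite "\<lambda>_::'i. lborel :: real measure"
  by (simp add: product_sigma_finite_def lborel.sigma_finite_measure_axioms)

lemma nn_integral_arcsine:
  assumes "s > 0"
  shows "(\<integral>\<^sup>+ y\<in>{0..s}. ennreal (y powr (-1/2) * (s - y) powr (-1/2)) \<partial>lborel) = pi"
proof -
  have "((\<lambda>t. t powr (-1/2) * (1 - t) powr (-1/2)) has_integral pi) {0..1}"
    using has_integral_Beta_real[of "1/2" "1/2"] by (simp add: Beta_def Gamma_one_half_real)
  then have unit: "(\<integral>\<^sup>+ t\<in>{0..1}. ennreal (t powr (-1/2) * (1 - t) powr (-1/2)) \<partial>lborel) = pi"
    by (intro nn_integral_has_integral_lebesgue') auto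
  have scale: "ennreal ((s * t) powr (-1/2) * (s - s * t) powr (-1/2)) * indicator {0..s} (s * t)
      = ennreal (1 / s) * (ennreal (t powr (-1/2) * (1 - t) powr (-1/2)) * indicator {0..1} t)" for t
  proof -
    have iff: "s * t \<in> {0..s} \<longleftrightarrow> t \<in> {0..1}"
      using assms by (auto simp: zero_le_mult_iff mult_le_cancel_left1)
    show ?thesis
    proof (cases "t \<in> {0..1}")
      case True
      have "(s * t) powr (-1/2) * (s - s * t) powr (-1/2)
          = (s * t) powr (-1/2) * (s * (1 - t)) powr (-1/2)"
        by (simp add: right_diff_distrib)
      also have "\<dots> = (s powr (-1/2) * s powr (-1/2)) * (t powr (-1/2) * (1 - t) powr (-1/2))"
        using True assms by (simp add: powr_mult)
      also have "s powr (-1/2) * s powr (-1/2) = 1 / s"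
        using assms by (simp flip: powr_add add: powr_minus_divide)
      finally show ?thesis
        using True assms iff by (simp flip: ennreal_mult)
    next
      case False
      with iff have "s * t \<notin> {0..s}" by blast
      with False show ?thesis by simp
    qed
  qed
  have "(\<integral>\<^sup>+ y\<in>{0..s}. ennreal (y powr (-1/2) * (s - y) powr (-1/2)) \<partial>lborel)
      = ennreal s * (\<integral>\<^sup>+ t. ennreal ((s * t) powr (-1/2) * (s - s * t) powr (-1/2)) * indicator {0..s} (s * t) \<partial>lborel)"
    using nn_integral_real_affine[of "\<lambda>y. ennreal (y powr (-1/2) * (s - y) powr (-1/2)) * indicator {0..s} y" s 0] assms
    by (simp add: nn_integral_set_ennreal)
  also have "\<dots> = ennreal s * (\<integral>\<^sup>+ t. ennreal (1 / s) * (ennreal (t powr (-1/2) * (1 - t) powr (-1/2)) * indicator {0..1} t) \<partial>lborel)"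
    by (simp only: scale)
  also have "\<dots> = ennreal s * (ennreal (1 / s) * pi)"
    using unit by (simp add: nn_integral_cmult)
  also have "\<dots> = pi"
    using assms by (simp add: mult.assoc flip: ennreal_mult)
  finally show ?thesis .
qed

lemma nn_integral_arcsine_le:
  "(\<integral>\<^sup>+ y\<in>{0..s}. ennreal (y powr (-1/2) * (s - y) powr (-1/2)) \<partial>lborel) \<le> pi"
proof (cases "s > 0")
  case False
  then have "(\<lambda>y. ennreal (y powr (-1/2) * (s - y) powr (-1/2)) * indicator {0..s} y) = (\<lambda>_. 0)"
    by (auto simp: indicator_def fun_eq_iff)
  then show ?thesis by simp
qed (simp only: nn_integral_arcsine order_refl)

definition half_kernel :: "real \<Rightarrow> real" where
  "half_kernel t = indicator {0..1} t * t powr (-1/2)"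

lemma half_kernel_nonneg: "0 \<le> half_kernel t"
  by (simp add: half_kernel_def)

lemma borel_measurable_half_kernel [measurable]: "half_kernel \<in> borel_measurable borel"
  unfolding half_kernel_def by measurable

lemma nn_integral_half_kernel: "(\<integral>\<^sup>+ t. ennreal (half_kernel t) \<partial>lborel) = 2"
proof -
  have "((\<lambda>t::real. t powr (-1/2)) has_integral 2) {0..1}"
    using has_integral_powr_from_0[of "-1/2" 1] by simp
  then have "(\<integral>\<^sup>+ t\<in>{0..1}. ennreal (t powr (-1/2)) \<partial>lborel) = ennreal 2"
    by (intro nn_integral_has_integral_lebesgue') auto
  moreover have "ennreal (half_kernel t) = ennreal (t powr (-1/2)) * indicator {0..1} t" for t
    by (simp add: half_kernel_def indicator_def)
  ultimately show ?thesis by simp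
qed

lemma nn_integral_prod_half_kernel:
  "finite I \<Longrightarrow> (\<integral>\<^sup>+ f. (\<Prod>a\<in>I. ennreal (half_kernel (f a))) \<partial>PiM I (\<lambda>_. lborel)) = 2 ^ card I"
  by (subst lborel_product.product_nn_integral_prod) (auto simp: nn_integral_half_kernel)

definition dirichlet_kernel :: "nat \<Rightarrow> (nat \<Rightarrow> real) \<Rightarrow> real" where
  "dirichlet_kernel k f = (\<Prod>a\<in>{1..<k}. half_kernel (f a)) * half_kernel (1 - (\<Sum>a\<in>{1..<k}. f a))"

lemma dirichlet_kernel_nonneg: "0 \<le> dirichlet_kernel k f"
  by (simp add: dirichlet_kernel_def half_kernel_nonneg prod_nonneg)

lemma borel_measurable_dirichlet_kernel [measurable]:
  "dirichlet_kernel k \<in> borel_measurable (PiM {1..<k} (\<lambda>_. lborel))"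
  unfolding dirichlet_kernel_def half_kernel_def by measurable

lemma nn_integral_half_kernel_convolution_le:
  "(\<integral>\<^sup>+ y. ennreal (half_kernel y * half_kernel (s - y)) \<partial>lborel) \<le> pi"
proof -
  have "ennreal (half_kernel y * half_kernel (s - y))
      \<le> ennreal (y powr (-1/2) * (s - y) powr (-1/2)) * indicator {0..s} y" for y
    by (auto simp: half_kernel_def indicator_def)
  then have "(\<integral>\<^sup>+ y. ennreal (half_kernel y * half_kernel (s - y)) \<partial>lborel)
      \<le> (\<integral>\<^sup>+ y\<in>{0..s}. ennreal (y powr (-1/2) * (s - y) powr (-1/2)) \<partial>lborel)"
    by (rule nn_integral_mono)
  also have "\<dots> \<le> pi" by (rule nn_integral_arcsine_le)
  finally show ?thesis .
qed

lemma dirichlet_kernel_upd_last: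
  assumes "k \<ge> 2"
  shows "dirichlet_kernel k (f(k-1 := y))
       = (\<Prod>a\<in>{1..<k-1}. half_kernel (f a)) * (half_kernel y * half_kernel ((1 - (\<Sum>a\<in>{1..<k-1}. f a)) - y))"
proof -
  have ins: "{1..<k} = insert (k-1) {1..<k-1}" using assms by auto
  have "(\<Prod>a\<in>{1..<k}. half_kernel ((f(k-1 := y)) a)) = half_kernel y * (\<Prod>a\<in>{1..<k-1}. half_kernel (f a))"
    unfolding ins by (subst prod.insert) (auto intro!: prod.cong)
  moreover have "(\<Sum>a\<in>{1..<k}. (f(k-1 := y)) a) = y + (\<Sum>a\<in>{1..<k-1}. f a)"
    unfolding ins by (subst sum.insert) (auto intro!: sum.cong)
  ultimately show ?thesis
    by (simp add: dirichlet_kernel_def algebra_simps)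
qed

lemma nn_integral_dirichlet_kernel_le:
  assumes "k \<ge> 2"
  shows "(\<integral>\<^sup>+ f. ennreal (dirichlet_kernel k f) \<partial>PiM {1..<k} (\<lambda>_. lborel)) \<le> ennreal (pi * 2 ^ (k - 2))"
proof -
  let ?I = "{1..<k-1}"
  have ins: "{1..<k} = insert (k-1) ?I" using assms by auto
  \<comment> \<open>Integrating out coordinate \<open>k - 1\<close> leaves an arcsine integral, the other coordinates give 2 each.\<close>
  have "(\<integral>\<^sup>+ f. ennreal (dirichlet_kernel k f) \<partial>PiM {1..<k} (\<lambda>_. lborel))
      = (\<integral>\<^sup>+ f. (\<integral>\<^sup>+ y. ennreal (dirichlet_kernel k (f(k-1 := y))) \<partial>lborel) \<partial>PiM ?I (\<lambda>_. lborel))"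
    using borel_measurable_dirichlet_kernel[of k] unfolding ins
    by (intro lborel_product.product_nn_integral_insert) auto
  also have "\<dots> \<le> (\<integral>\<^sup>+ f. (\<Prod>a\<in>?I. ennreal (half_kernel (f a))) * pi \<partial>PiM ?I (\<lambda>_. lborel))"
  proof (rule nn_integral_mono)
    fix f :: "nat \<Rightarrow> real"
    have "(\<integral>\<^sup>+ y. ennreal (dirichlet_kernel k (f(k-1 := y))) \<partial>lborel)
        = ennreal (\<Prod>a\<in>?I. half_kernel (f a))
          * (\<integral>\<^sup>+ y. ennreal (half_kernel y * half_kernel ((1 - (\<Sum>a\<in>?I. f a)) - y)) \<partial>lborel)"
      unfolding dirichlet_kernel_upd_last[OF assms]
      by (simp add: ennreal_mult' prod_nonneg half_kernel_nonneg nn_integral_cmult)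
    also have "\<dots> \<le> ennreal (\<Prod>a\<in>?I. half_kernel (f a)) * pi"
      by (intro mult_left_mono nn_integral_half_kernel_convolution_le) auto
    finally show "(\<integral>\<^sup>+ y. ennreal (dirichlet_kernel k (f(k-1 := y))) \<partial>lborel)
        \<le> (\<Prod>a\<in>?I. ennreal (half_kernel (f a))) * pi"
      by (simp add: prod_ennreal half_kernel_nonneg)
  qed
  also have "\<dots> = 2 ^ card ?I * ennreal pi"
    by (subst nn_integral_multc) (auto simp: nn_integral_prod_half_kernel)
  also have "\<dots> = ennreal (pi * 2 ^ (k - 2))"
    by (simp add: ennreal_mult' mult.commute numeral_2_eq_2 flip: ennreal_power)
  finally show ?thesis .
qed

definition arcsine_density :: "real \<Rightarrow> real" where
  "arcsine_density t = indicator {0..1} t * (t powr (-1/2) * (1 - t) powr (-1/2)) / pi"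

lemma arcsine_density_nonneg: "0 \<le> arcsine_density t"
  by (simp add: arcsine_density_def)

lemma borel_measurable_arcsine_density [measurable]: "arcsine_density \<in> borel_measurable borel"
  unfolding arcsine_density_def by measurable

lemma nn_integral_arcsine_density: "(\<integral>\<^sup>+ t. ennreal (arcsine_density t) \<partial>lborel) = 1"
proof -
  have "ennreal (arcsine_density t)
      = ennreal (1 / pi) * (ennreal (t powr (-1/2) * (1 - t) powr (-1/2)) * indicator {0..1} t)" for t
    by (simp add: arcsine_density_def indicator_def flip: ennreal_mult)
  then show ?thesis
    using nn_integral_arcsine[of 1] by (simp add: nn_integral_cmult flip: ennreal_mult)
qed

lemma nn_integral_prod_arcsine_density:
  "finite K \<Longrightarrow> (\<integral>\<^sup>+ g. (\<Prod>p\<in>K. ennreal (arcsine_density (g p))) \<partial>PiM K (\<lambda>_. lborel)) = 1"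
  by (subst lborel_product.product_nn_integral_prod) (auto simp: nn_integral_arcsine_density)

definition dirichlet_const :: "nat \<Rightarrow> real" where
  "dirichlet_const k = Gamma (real k / 2) / Gamma (1/2) ^ k"

lemma dirichlet_const_nonneg: "k \<ge> 1 \<Longrightarrow> 0 \<le> dirichlet_const k"
  unfolding dirichlet_const_def by (intro divide_nonneg_nonneg less_imp_le Gamma_real_pos) auto

lemma Gamma_half_le_exp:
  assumes "k \<ge> 1"
  shows "Gamma (real k / 2) \<le> exp (real k ^ 2)"
  using assms
proof (induction k rule: less_induct)
  case (less k)
  consider "k = 1" | "k = 2" | "k \<ge> 3" using less.prems by linarith
  then show ?case
  proof cases
    case 1
    have "sqrt pi \<le> 2" using pi_less_4 real_sqrt_le_mono[of pi 4] by simp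
    moreover have "2 \<le> exp (1::real)" using exp_ge_add_one_self[of 1] by simp
    ultimately show ?thesis using 1 by (simp add: Gamma_one_half_real)
  next
    case 2
    then show ?thesis using Gamma_fact[of 0, where 'a = real] by simp
  next
    case 3
    define m where "m = k - 2"
    have m: "1 \<le> m" "m < k" "real k = real m + 2" using 3 by (auto simp: m_def)
    have "Gamma (real k / 2) = real m / 2 * Gamma (real m / 2)"
      using Gamma_plus1[of "real m / 2"] m by (auto simp: add_divide_distrib nonpos_Ints_def)
    also have "\<dots> \<le> exp (real m) * exp (real m ^ 2)"
    proof (intro mult_mono less.IH m)
      show "real m / 2 \<le> exp (real m)" using exp_ge_add_one_self[of "real m"] by linarith
    qed (use m in \<open>auto intro!: less_imp_le[OF Gamma_real_pos]\<close>)
    also have "\<dots> \<le> exp (real k ^ 2)"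
      unfolding mult_exp_exp m(3) by (simp add: power2_eq_square algebra_simps)
    finally show ?thesis .
  qed
qed

lemma dirichlet_const_le_exp:
  assumes "k \<ge> 1"
  shows "dirichlet_const k \<le> exp (real k ^ 2)"
proof -
  have "1 \<le> Gamma (1/2::real) ^ k"
    using pi_gt3 by (simp add: Gamma_one_half_real)
  then have "dirichlet_const k \<le> Gamma (real k / 2)"
    using assms Gamma_real_pos[of "real k / 2"] by (simp add: dirichlet_const_def divide_le_eq)
  also have "\<dots> \<le> exp (real k ^ 2)" by (rule Gamma_half_le_exp[OF assms])
  finally show ?thesis .
qed

lemma finite_upper_pairs: "finite (upper_pairs k)"
  by (rule finite_subset[of _ "{1..k} \<times> {1..k}"]) (auto simp: upper_pairs_def)

lemma upper_pairs_1: "upper_pairs 1 = {(1, 1)}"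
  by (auto simp: upper_pairs_def)

lemma KT_prior_eq:
  assumes th: "(pi_of k f, P_of g) \<in> Theta k" and k: "k \<ge> 1"
  shows "KT_prior k (pi_of k f) (P_of g)
       = dirichlet_const k * dirichlet_kernel k f * (\<Prod>p\<in>upper_pairs k. arcsine_density (g p))"
proof -
  have pi: "0 < pi_of k f a \<and> pi_of k f a \<le> 1" if "a \<in> {1..k}" for a
    using th that by (auto simp: Theta_def)
  have P: "0 \<le> P_of g a b \<and> P_of g a b \<le> 1" if "a \<in> {1..k}" "b \<in> {1..k}" for a b
    using th that by (auto simp: Theta_def)
  have "pi_of k f a powr (-1/2) = half_kernel (f a)" if "a \<in> {1..<k}" for a
    using pi[of a] that by (simp add: pi_of_def half_kernel_def)
  moreover have "pi_of k f k powr (-1/2) = half_kernel (1 - (\<Sum>a\<in>{1..<k}. f a))"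
    using pi[of k] k by (simp add: pi_of_def half_kernel_def)
  moreover have "{1..k} = insert k {1..<k}" using k by auto
  ultimately have simplex: "(\<Prod>a\<in>{1..k}. pi_of k f a powr (-1/2)) = dirichlet_kernel k f"
    by (simp add: dirichlet_kernel_def mult.commute)
  have "1 / Gamma (1/2) ^ 2 * P_of g a b powr (-1/2) * (1 - P_of g a b) powr (-1/2) = arcsine_density (g (a, b))"
    if "(a, b) \<in> upper_pairs k" for a b
    using that P[of a b] by (auto simp: upper_pairs_def P_of_def arcsine_density_def Gamma_one_half_real)
  then have edges: "(\<Prod>(a, b)\<in>upper_pairs k. 1 / Gamma (1/2) ^ 2 * P_of g a b powr (-1/2) * (1 - P_of g a b) powr (-1/2))
      = (\<Prod>p\<in>upper_pairs k. arcsine_density (g p))"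
    by (intro prod.cong) auto
  show ?thesis
    unfolding KT_prior_def simplex edges dirichlet_const_def by simp
qed

lemma KT_prior_1:
  assumes "(pi_of 1 f, P_of g) \<in> Theta 1"
  shows "KT_prior 1 (pi_of 1 f) (P_of g) = arcsine_density (g (1, 1))"
  using KT_prior_eq[OF assms order_refl] unfolding upper_pairs_1
  by (simp add: dirichlet_const_def dirichlet_kernel_def half_kernel_def Gamma_one_half_real)

section \<open>Pair counts and the likelihood\<close>

lemma finite_pairs_less: "finite {(i, j). i < n \<and> j < (n::nat) \<and> Q i j}"
  by (rule finite_subset[of _ "{..<n} \<times> {..<n}"]) auto

lemma cnt_nn_card:
  "cnt_nn n z a b = card {(i, j). i < n \<and> j < n \<and> i \<noteq> j \<and> z i = a \<and> z j = b}"
proof -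
  let ?S = "\<lambda>a. {i. i < n \<and> z i = a}"
  show ?thesis
  proof (cases "a = b")
    case False
    then have "{(i, j). i < n \<and> j < n \<and> i \<noteq> j \<and> z i = a \<and> z j = b} = ?S a \<times> ?S b"
      by auto
    then show ?thesis using False by (simp add: cnt_nn_def cnt_n_def card_cartesian_product)
  next
    case True
    then have "{(i, j). i < n \<and> j < n \<and> i \<noteq> j \<and> z i = a \<and> z j = b} = ?S a \<times> ?S a - (\<lambda>i. (i, i)) ` ?S a"
      by auto
    moreover have "card (?S a \<times> ?S a - (\<lambda>i. (i, i)) ` ?S a) = card (?S a) * card (?S a) - card (?S a)"
      by (subst card_Diff_subset) (auto simp: card_cartesian_product card_image inj_on_def)
    ultimately show ?thesis using True by (simp add: cnt_nn_def cnt_n_def diff_mult_distrib2)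
  qed
qed

lemma cnt_O_card:
  assumes "adj_matrix n x"
  shows "cnt_O n z x a b = card {(i, j). i < n \<and> j < n \<and> i \<noteq> j \<and> z i = a \<and> z j = b \<and> x i j}"
  using assms unfolding cnt_O_def adj_matrix_def by (metis (lifting))

lemma cnt_O_le_cnt_nn: "adj_matrix n x \<Longrightarrow> cnt_O n z x a b \<le> cnt_nn n z a b"
  unfolding cnt_O_card cnt_nn_card by (rule card_mono[OF finite_pairs_less]) auto

lemma cnt_nn_minus_cnt_O:
  assumes "adj_matrix n x"
  shows "cnt_nn n z a b - cnt_O n z x a b
       = card {(i, j). i < n \<and> j < n \<and> i \<noteq> j \<and> z i = a \<and> z j = b \<and> \<not> x i j}"
proof -
  have "{(i, j). i < n \<and> j < n \<and> i \<noteq> j \<and> z i = a \<and> z j = b \<and> \<not> x i j}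
      = {(i, j). i < n \<and> j < n \<and> i \<noteq> j \<and> z i = a \<and> z j = b}
        - {(i, j). i < n \<and> j < n \<and> i \<noteq> j \<and> z i = a \<and> z j = b \<and> x i j}"
    by auto
  then show ?thesis
    unfolding cnt_O_card[OF assms] cnt_nn_card
    by (simp add: card_Diff_subset finite_pairs_less subset_iff)
qed

lemma cnt_nn_le: "cnt_nn n z a b \<le> n * n"
proof -
  have "cnt_nn n z a b \<le> card ({..<n} \<times> {..<n})"
    unfolding cnt_nn_card by (rule card_mono) auto
  then show ?thesis by (simp add: card_cartesian_product)
qed

lemma sbm_joint_bounds:
  assumes th: "(\<pi>, P) \<in> Theta k" and adj: "adj_matrix n x"
  shows "0 \<le> sbm_joint k \<pi> P n z x" and "sbm_joint k \<pi> P n z x \<le> 1"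
proof -
  have pi: "0 \<le> \<pi> a ^ m \<and> \<pi> a ^ m \<le> 1" if "a \<in> {1..k}" for a m
  proof -
    have "0 < \<pi> a \<and> \<pi> a \<le> 1" using th that by (auto simp: Theta_def)
    then show ?thesis by (simp add: power_le_one)
  qed
  have P: "0 \<le> P a b \<and> P a b \<le> 1" if "a \<in> {1..k}" "b \<in> {1..k}" for a b
    using th that by (auto simp: Theta_def)
  have e: "0 \<le> (real (cnt_nn n z a b) - real (cnt_O n z x a b)) / 2" for a b
    using cnt_O_le_cnt_nn[OF adj, of z a b] by simp
  show "0 \<le> sbm_joint k \<pi> P n z x" "sbm_joint k \<pi> P n z x \<le> 1"
    unfolding sbm_joint_def using pi P e
    by (auto intro!: prod_nonneg prod_le_1 mult_nonneg_nonneg mult_le_one pw_nonneg pw_le_1)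
qed

lemma sbm_prob_le:
  assumes "(\<pi>, P) \<in> Theta k" and "adj_matrix n x"
  shows "sbm_prob k \<pi> P n x \<le> real k ^ n"
proof -
  have "sbm_prob k \<pi> P n x \<le> (\<Sum>z\<in>PiE {0..<n} (\<lambda>_. {1..k}). 1)"
    unfolding sbm_prob_def by (intro sum_mono sbm_joint_bounds[OF assms])
  then show ?thesis by (simp add: card_PiE)
qed

lemma sbm_joint_1_ge:
  assumes adj: "adj_matrix n x" and P: "exp (-2) \<le> P 1 1" "exp (-2) \<le> 1 - P 1 1" and "\<pi> 1 = 1"
  shows "exp (- real (n * n)) \<le> sbm_joint 1 \<pi> P n z x"
proof -
  let ?O = "real (cnt_O n z x 1 1)" and ?N = "real (cnt_nn n z 1 1)"
  have "?O \<le> ?N" using cnt_O_le_cnt_nn[OF adj] by simp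
  have "0 \<le> P 1 1" using P(1) exp_gt_zero[of "-2"] by linarith
  have "?N \<le> real (n * n)" using cnt_nn_le[of n z 1 1] by (simp only: of_nat_le_iff)
  then have "exp (- real (n * n)) \<le> exp (- ?N)" by simp
  also have "\<dots> = exp (-2 * (?O / 2)) * exp (-2 * ((?N - ?O) / 2))"
    by (subst mult_exp_exp) (simp add: algebra_simps)
  also have "\<dots> \<le> pw (P 1 1) (?O / 2) * pw (1 - P 1 1) ((?N - ?O) / 2)"
    by (intro mult_mono exp_le_pw pw_nonneg) (use P \<open>?O \<le> ?N\<close> \<open>0 \<le> P 1 1\<close> in auto)
  also have "\<dots> = sbm_joint 1 \<pi> P n z x"
    using assms(4) by (simp add: sbm_joint_def)
  finally show ?thesis .
qed

section \<open>The sample is almost surely an adjacency matrix\<close>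

definition sbm_edge_factor :: "nat \<Rightarrow> (nat \<Rightarrow> nat \<Rightarrow> real) \<Rightarrow> nat \<Rightarrow> (nat \<Rightarrow> nat) \<Rightarrow>
    (nat \<Rightarrow> nat \<Rightarrow> bool) \<Rightarrow> real" where
  "sbm_edge_factor k P n z x =
     (\<Prod>a\<in>{1..k}. \<Prod>b\<in>{1..k}.
        pw (P a b) (real (cnt_O n z x a b) / 2) *
        pw (1 - P a b) ((real (cnt_nn n z a b) - real (cnt_O n z x a b)) / 2))"

lemma sbm_joint_eq:
  assumes "z \<in> PiE {0..<n} (\<lambda>_. {1..k})"
  shows "sbm_joint k \<pi> P n z x = (\<Prod>i<n. \<pi> (z i)) * sbm_edge_factor k P n z x"
proof -
  have cnt: "cnt_n n z a = card {i \<in> {..<n}. z i = a}" for a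
    by (simp add: cnt_n_def)
  have "(\<Prod>a\<in>{1..k}. \<pi> a ^ cnt_n n z a) = (\<Prod>i<n. \<pi> (z i))"
    unfolding cnt using assms by (intro prod_power_card_fibers) (auto simp: PiE_def Pi_def)
  then show ?thesis by (simp add: sbm_joint_def sbm_edge_factor_def)
qed

definition off_diagonal :: "nat \<Rightarrow> (nat \<times> nat) set" where
  "off_diagonal n = {(i, j). i < n \<and> j < n \<and> i \<noteq> j}"

definition node_pairs :: "nat \<Rightarrow> (nat \<times> nat) set" where
  "node_pairs n = {(i, j). i < j \<and> j < n}"

lemma finite_off_diagonal: "finite (off_diagonal n)"
  unfolding off_diagonal_def by (rule finite_pairs_less)

lemma finite_node_pairs: "finite (node_pairs n)"
  by (rule finite_subset[of _ "{..<n} \<times> {..<n}"]) (auto simp: node_pairs_def)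

lemma off_diagonal_eq: "off_diagonal n = node_pairs n \<union> prod.swap ` node_pairs n"
  by (auto simp: off_diagonal_def node_pairs_def image_def)

definition edge_lik :: "(nat \<Rightarrow> nat \<Rightarrow> real) \<Rightarrow> (nat \<Rightarrow> nat) \<Rightarrow> (nat \<Rightarrow> nat \<Rightarrow> bool) \<Rightarrow>
    nat \<times> nat \<Rightarrow> real" where
  "edge_lik P z x p =
     (if x (fst p) (snd p) then P (z (fst p)) (z (snd p)) else 1 - P (z (fst p)) (z (snd p)))"

lemma prod_edge_lik_fiber:
  assumes "adj_matrix n x"
  shows "(\<Prod>p\<in>{p \<in> off_diagonal n. (z (fst p), z (snd p)) = (a, b)}. edge_lik P z x p)
       = P a b ^ cnt_O n z x a b * (1 - P a b) ^ (cnt_nn n z a b - cnt_O n z x a b)"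
proof -
  let ?F = "{p \<in> off_diagonal n. (z (fst p), z (snd p)) = (a, b)}" and ?E = "{p. x (fst p) (snd p)}"
  have "(\<Prod>p\<in>?F. edge_lik P z x p) = (\<Prod>p\<in>?F. if x (fst p) (snd p) then P a b else 1 - P a b)"
    by (intro prod.cong) (auto simp: edge_lik_def)
  also have "\<dots> = (\<Prod>p\<in>?F \<inter> ?E. P a b) * (\<Prod>p\<in>?F \<inter> - ?E. 1 - P a b)"
    using finite_off_diagonal by (intro prod.If_cases) auto
  also have "\<dots> = P a b ^ card (?F \<inter> ?E) * (1 - P a b) ^ card (?F \<inter> - ?E)"
    by simp
  also have "card (?F \<inter> ?E) = cnt_O n z x a b"
    unfolding cnt_O_card[OF assms] by (intro arg_cong[where f = card]) (auto simp: off_diagonal_def)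
  also have "card (?F \<inter> - ?E) = cnt_nn n z a b - cnt_O n z x a b"
    unfolding cnt_nn_minus_cnt_O[OF assms] by (intro arg_cong[where f = card]) (auto simp: off_diagonal_def)
  finally show ?thesis by simp
qed

text \<open>The exponents \<open>O\<^sub>a\<^sub>b / 2\<close> need not be integers; squaring turns them into counts of ordered pairs.\<close>

lemma sbm_edge_factor_square:
  assumes th: "(\<pi>, P) \<in> Theta k" and adj: "adj_matrix n x" and z: "z \<in> PiE {0..<n} (\<lambda>_. {1..k})"
  shows "sbm_edge_factor k P n z x ^ 2 = (\<Prod>p\<in>off_diagonal n. edge_lik P z x p)"
proof -
  have P: "0 \<le> P a b \<and> P a b \<le> 1" if "a \<in> {1..k}" "b \<in> {1..k}" for a b
    using th that by (auto simp: Theta_def)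
  have "sbm_edge_factor k P n z x ^ 2
      = (\<Prod>a\<in>{1..k}. \<Prod>b\<in>{1..k}. P a b ^ cnt_O n z x a b * (1 - P a b) ^ (cnt_nn n z a b - cnt_O n z x a b))"
    unfolding sbm_edge_factor_def prod_power_distrib
  proof (intro prod.cong refl)
    fix a b assume ab: "a \<in> {1..k}" "b \<in> {1..k}"
    have e: "(real (cnt_nn n z a b) - real (cnt_O n z x a b)) / 2 = real (cnt_nn n z a b - cnt_O n z x a b) / 2"
      using cnt_O_le_cnt_nn[OF adj] by simp
    show "(pw (P a b) (real (cnt_O n z x a b) / 2)
          * pw (1 - P a b) ((real (cnt_nn n z a b) - real (cnt_O n z x a b)) / 2)) ^ 2
        = P a b ^ cnt_O n z x a b * (1 - P a b) ^ (cnt_nn n z a b - cnt_O n z x a b)"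
      unfolding e power_mult_distrib using P[OF ab] by (simp add: pw_half_square)
  qed
  also have "\<dots> = (\<Prod>t\<in>{1..k} \<times> {1..k}. \<Prod>p\<in>{p \<in> off_diagonal n. (z (fst p), z (snd p)) = t}. edge_lik P z x p)"
    unfolding prod.cartesian_product
    by (intro prod.cong refl) (clarify, simp only: prod_edge_lik_fiber[OF adj] case_prod_conv)
  also have "\<dots> = (\<Prod>p\<in>off_diagonal n. edge_lik P z x p)"
    using z by (intro prod.group finite_off_diagonal) (auto simp: off_diagonal_def PiE_def Pi_def)
  finally show ?thesis .
qed

lemma sbm_edge_factor_eq:
  assumes th: "(\<pi>, P) \<in> Theta k" and adj: "adj_matrix n x" and z: "z \<in> PiE {0..<n} (\<lambda>_. {1..k})"
  shows "sbm_edge_factor k P n z x = (\<Prod>p\<in>node_pairs n. edge_lik P z x p)"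
proof -
  have P: "0 \<le> P a b \<and> P a b \<le> 1 \<and> P a b = P b a" if "a \<in> {1..k}" "b \<in> {1..k}" for a b
    using th that by (auto simp: Theta_def)
  have z_range: "z i \<in> {1..k}" if "i < n" for i
    using z that by (auto simp: PiE_def Pi_def)
  have swap: "edge_lik P z x (prod.swap p) = edge_lik P z x p" if "p \<in> node_pairs n" for p
    using that adj P[OF z_range z_range] by (auto simp: node_pairs_def adj_matrix_def edge_lik_def)
  have "(\<Prod>p\<in>off_diagonal n. edge_lik P z x p)
      = (\<Prod>p\<in>node_pairs n. edge_lik P z x p) * (\<Prod>p\<in>prod.swap ` node_pairs n. edge_lik P z x p)"
    unfolding off_diagonal_eq using finite_node_pairs[of n]
    by (intro prod.union_disjoint) (auto simp: node_pairs_def)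
  also have "(\<Prod>p\<in>prod.swap ` node_pairs n. edge_lik P z x p) = (\<Prod>p\<in>node_pairs n. edge_lik P z x p)"
    by (subst prod.reindex) (auto simp: swap intro!: prod.cong)
  finally have "sbm_edge_factor k P n z x ^ 2 = (\<Prod>p\<in>node_pairs n. edge_lik P z x p) ^ 2"
    using sbm_edge_factor_square[OF th adj z] by (simp add: power2_eq_square)
  moreover have "0 \<le> sbm_edge_factor k P n z x"
    unfolding sbm_edge_factor_def using P by (auto intro!: prod_nonneg mult_nonneg_nonneg pw_nonneg)
  moreover have "0 \<le> (\<Prod>p\<in>node_pairs n. edge_lik P z x p)"
    using P[OF z_range z_range] by (intro prod_nonneg) (auto simp: edge_lik_def node_pairs_def)
  ultimately show ?thesis by simp
qed

definition graph_of :: "(nat \<times> nat) set \<Rightarrow> nat \<Rightarrow> nat \<Rightarrow> bool" where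
  "graph_of A i j \<longleftrightarrow> (i, j) \<in> A \<or> (j, i) \<in> A"

lemma adj_matrix_graph_of: "A \<subseteq> node_pairs n \<Longrightarrow> adj_matrix n (graph_of A)"
  by (auto simp: adj_matrix_def graph_of_def node_pairs_def)

lemma graph_of_node_pair:
  "A \<subseteq> node_pairs n \<Longrightarrow> p \<in> node_pairs n \<Longrightarrow> graph_of A (fst p) (snd p) \<longleftrightarrow> p \<in> A"
  by (auto simp: graph_of_def node_pairs_def)

lemma sum_sbm_edge_factor_graph_of:
  assumes th: "(\<pi>, P) \<in> Theta k" and z: "z \<in> PiE {0..<n} (\<lambda>_. {1..k})"
  shows "(\<Sum>A\<in>Pow (node_pairs n). sbm_edge_factor k P n z (graph_of A)) = 1"
proof -
  let ?u = "\<lambda>p. P (z (fst p)) (z (snd p))"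
  have "sbm_edge_factor k P n z (graph_of A) = (\<Prod>p\<in>A. ?u p) * (\<Prod>p\<in>node_pairs n - A. 1 - ?u p)"
    if A: "A \<subseteq> node_pairs n" for A
  proof -
    have "sbm_edge_factor k P n z (graph_of A) = (\<Prod>p\<in>node_pairs n. if p \<in> A then ?u p else 1 - ?u p)"
      unfolding sbm_edge_factor_eq[OF th adj_matrix_graph_of[OF A] z] edge_lik_def
      using A by (intro prod.cong) (auto simp: graph_of_node_pair)
    also have "\<dots> = (\<Prod>p\<in>A. ?u p) * (\<Prod>p\<in>node_pairs n - A. 1 - ?u p)"
      by (subst prod.If_cases[OF finite_node_pairs]) (simp add: Int_absorb1[OF A] Diff_eq)
    finally show ?thesis .
  qed
  then have "(\<Sum>A\<in>Pow (node_pairs n). sbm_edge_factor k P n z (graph_of A))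
      = (\<Sum>A\<in>Pow (node_pairs n). (\<Prod>p\<in>A. ?u p) * (\<Prod>p\<in>node_pairs n - A. 1 - ?u p))"
    by (intro sum.cong) auto
  also have "\<dots> = (\<Prod>p\<in>node_pairs n. ?u p + (1 - ?u p))"
    by (rule prod_add[symmetric, OF finite_node_pairs])
  finally show ?thesis by simp
qed

lemma sum_sbm_prob_graph_of:
  assumes th: "(\<pi>, P) \<in> Theta k"
  shows "(\<Sum>A\<in>Pow (node_pairs n). sbm_prob k \<pi> P n (graph_of A)) = 1"
proof -
  have "(\<Sum>A\<in>Pow (node_pairs n). sbm_prob k \<pi> P n (graph_of A))
      = (\<Sum>z\<in>PiE {0..<n} (\<lambda>_. {1..k}). (\<Prod>i<n. \<pi> (z i))
           * (\<Sum>A\<in>Pow (node_pairs n). sbm_edge_factor k P n z (graph_of A)))"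
    unfolding sbm_prob_def sum_distrib_left
    by (subst sum.swap) (intro sum.cong refl, simp add: sbm_joint_eq)
  also have "\<dots> = (\<Sum>z\<in>PiE {0..<n} (\<lambda>_. {1..k}). \<Prod>i\<in>{0..<n}. \<pi> (z i))"
    by (intro sum.cong) (auto simp: sum_sbm_edge_factor_graph_of[OF th] atLeast0LessThan)
  also have "\<dots> = (\<Prod>i\<in>{0..<n}. \<Sum>a\<in>{1..k}. \<pi> a)"
    by (rule prod_sum_PiE[symmetric]) auto
  also have "\<dots> = 1" using th by (simp add: Theta_def)
  finally show ?thesis .
qed

lemma graph_of_agree_imp_eq:
  assumes "A \<subseteq> node_pairs n" "B \<subseteq> node_pairs n"
    and "\<And>i j. i < n \<Longrightarrow> j < n \<Longrightarrow> graph_of A i j = graph_of B i j"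
  shows "A = B"
proof -
  have "p \<in> A \<longleftrightarrow> p \<in> B" if "p \<in> node_pairs n" for p
    using assms(3)[of "fst p" "snd p"] graph_of_node_pair[OF assms(1) that] graph_of_node_pair[OF assms(2) that]
      that by (auto simp: node_pairs_def)
  with assms(1,2) show ?thesis by blast
qed

lemma AE_adj_matrix_at:
  assumes "prob_space M" and th: "(\<pi>, P) \<in> Theta k"
    and law: "\<And>x. adj_matrix n x \<Longrightarrow>
           {\<omega> \<in> space M. \<forall>i<n. \<forall>j<n. X \<omega> i j = x i j} \<in> sets M \<and>
           measure M {\<omega> \<in> space M. \<forall>i<n. \<forall>j<n. X \<omega> i j = x i j} = sbm_prob k \<pi> P n x"
  shows "AE \<omega> in M. adj_matrix n (X \<omega>)"
proof -
  interpret prob_space M by fact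
  define E where "E A = {\<omega> \<in> space M. \<forall>i<n. \<forall>j<n. X \<omega> i j = graph_of A i j}" for A
  have E: "E A \<in> events" "prob (E A) = sbm_prob k \<pi> P n (graph_of A)" if "A \<in> Pow (node_pairs n)" for A
  proof -
    have "adj_matrix n (graph_of A)" using that by (simp add: adj_matrix_graph_of)
    from law[OF this] show "E A \<in> events" "prob (E A) = sbm_prob k \<pi> P n (graph_of A)"
      unfolding E_def by (rule conjunct1, rule conjunct2)
  qed
  have "disjoint_family_on E (Pow (node_pairs n))"
    unfolding disjoint_family_on_def
  proof (intro ballI impI equals0I)
    fix A B \<omega> assume "A \<in> Pow (node_pairs n)" "B \<in> Pow (node_pairs n)" "A \<noteq> B" "\<omega> \<in> E A \<inter> E B"
    then show False
      using graph_of_agree_imp_eq[of A n B] by (auto simp: E_def)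
  qed
  moreover have "finite (Pow (node_pairs n))" by (simp add: finite_node_pairs)
  moreover have "E ` Pow (node_pairs n) \<subseteq> events" using E(1) by blast
  ultimately have "prob (\<Union>A\<in>Pow (node_pairs n). E A) = (\<Sum>A\<in>Pow (node_pairs n). prob (E A))"
    by (intro finite_measure_finite_Union)
  also have "\<dots> = (\<Sum>A\<in>Pow (node_pairs n). sbm_prob k \<pi> P n (graph_of A))"
    by (rule sum.cong[OF refl E(2)])
  also have "\<dots> = 1" by (rule sum_sbm_prob_graph_of[OF th])
  finally have "AE \<omega> in M. \<omega> \<in> (\<Union>A\<in>Pow (node_pairs n). E A)"
    by (rule AE_prob_1)
  then show ?thesis
  proof (rule eventually_mono)
    fix \<omega> assume "\<omega> \<in> (\<Union>A\<in>Pow (node_pairs n). E A)"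
    then obtain A where A: "A \<subseteq> node_pairs n" and agree: "\<forall>i<n. \<forall>j<n. X \<omega> i j = graph_of A i j"
      by (auto simp: E_def)
    show "adj_matrix n (X \<omega>)"
      using adj_matrix_graph_of[OF A] agree by (simp add: adj_matrix_def)
  qed
qed

lemma AE_adj_matrix:
  assumes "prob_space M" and "(\<pi>, P) \<in> Theta k"
    and "\<And>n x. adj_matrix n x \<Longrightarrow>
           {\<omega> \<in> space M. \<forall>i<n. \<forall>j<n. X n \<omega> i j = x i j} \<in> sets M \<and>
           measure M {\<omega> \<in> space M. \<forall>i<n. \<forall>j<n. X n \<omega> i j = x i j} = sbm_prob k \<pi> P n x"
  shows "AE \<omega> in M. \<forall>n. adj_matrix n (X n \<omega>)"
  using AE_adj_matrix_at[OF assms] by (simp add: AE_all_countable)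

section \<open>Bounds on the KT mixture\<close>

definition KT_integrand :: "nat \<Rightarrow> nat \<Rightarrow> (nat \<Rightarrow> nat \<Rightarrow> bool) \<Rightarrow>
    (nat \<Rightarrow> real) \<times> (nat \<times> nat \<Rightarrow> real) \<Rightarrow> real" where
  "KT_integrand k n x y =
     (if (pi_of k (fst y), P_of (snd y)) \<in> Theta k
      then sbm_prob k (pi_of k (fst y)) (P_of (snd y)) n x * KT_prior k (pi_of k (fst y)) (P_of (snd y))
      else 0)"

lemma KT_eq_integral: "KT k n x = enn2real (\<integral>\<^sup>+ y. ennreal (KT_integrand k n x y) \<partial>KT_measure k)"
  unfolding KT_def KT_integrand_def ..

lemma KT_integrand_nonneg:
  assumes "k \<ge> 1" and "adj_matrix n x"
  shows "0 \<le> KT_integrand k n x y"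
proof (cases "(pi_of k (fst y), P_of (snd y)) \<in> Theta k")
  case True
  have "0 \<le> sbm_prob k (pi_of k (fst y)) (P_of (snd y)) n x"
    unfolding sbm_prob_def by (intro sum_nonneg sbm_joint_bounds(1)[OF True assms(2)])
  then show ?thesis
    using True assms(1) dirichlet_const_nonneg dirichlet_kernel_nonneg arcsine_density_nonneg
    by (simp add: KT_integrand_def KT_prior_eq prod_nonneg)
qed (simp add: KT_integrand_def)

lemma KT_integrand_le:
  assumes "k \<ge> 1" and "adj_matrix n x"
  shows "KT_integrand k n x y
       \<le> real k ^ n * dirichlet_const k * (dirichlet_kernel k (fst y) * (\<Prod>p\<in>upper_pairs k. arcsine_density (snd y p)))"
proof (cases "(pi_of k (fst y), P_of (snd y)) \<in> Theta k")
  case True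
  then show ?thesis
    using assms sbm_prob_le[OF True] dirichlet_const_nonneg dirichlet_kernel_nonneg arcsine_density_nonneg
    by (simp add: KT_integrand_def KT_prior_eq mult.assoc mult_right_mono prod_nonneg)
qed (use assms in \<open>simp add: KT_integrand_def dirichlet_const_nonneg dirichlet_kernel_nonneg
                                arcsine_density_nonneg prod_nonneg\<close>)

lemma KT_le:
  assumes k: "k \<ge> 2" and adj: "adj_matrix n x"
  shows "KT k n x \<le> real k ^ n * dirichlet_const k * (pi * 2 ^ (k - 2))"
proof -
  define c where "c = real k ^ n * dirichlet_const k"
  have c: "0 \<le> c" using k by (simp add: c_def dirichlet_const_nonneg)
  have pointwise: "ennreal (KT_integrand k n x y)
      \<le> ennreal c * (ennreal (dirichlet_kernel k (fst y)) * (\<Prod>p\<in>upper_pairs k. ennreal (arcsine_density (snd y p))))"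
    for y
  proof -
    have "ennreal (KT_integrand k n x y)
        \<le> ennreal (c * (dirichlet_kernel k (fst y) * (\<Prod>p\<in>upper_pairs k. arcsine_density (snd y p))))"
      using KT_integrand_le[of k n x y] k adj by (intro ennreal_leI) (simp add: c_def)
    then show ?thesis
      using c by (simp add: ennreal_mult' dirichlet_kernel_nonneg prod_ennreal arcsine_density_nonneg)
  qed
  have "(\<integral>\<^sup>+ y. ennreal (KT_integrand k n x y) \<partial>KT_measure k)
      \<le> (\<integral>\<^sup>+ y. ennreal c * (ennreal (dirichlet_kernel k (fst y))
            * (\<Prod>p\<in>upper_pairs k. ennreal (arcsine_density (snd y p)))) \<partial>KT_measure k)"
    by (intro nn_integral_mono pointwise)
  also have "\<dots> = ennreal c * ((\<integral>\<^sup>+ f. ennreal (dirichlet_kernel k f) \<partial>PiM {1..<k} (\<lambda>_. lborel))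
      * (\<integral>\<^sup>+ g. (\<Prod>p\<in>upper_pairs k. ennreal (arcsine_density (g p))) \<partial>PiM (upper_pairs k) (\<lambda>_. lborel)))"
    unfolding KT_measure_def
    by (subst nn_integral_cmult, measurable)
      (intro arg_cong2[where f = "(*)"] refl nn_integral_pair_measure_times lborel_product.sigma_finite
        finite_upper_pairs; measurable)
  also have "\<dots> \<le> ennreal c * ennreal (pi * 2 ^ (k - 2))"
    using nn_integral_dirichlet_kernel_le[OF k]
    by (simp add: nn_integral_prod_arcsine_density finite_upper_pairs mult_left_mono)
  finally have "(\<integral>\<^sup>+ y. ennreal (KT_integrand k n x y) \<partial>KT_measure k) \<le> ennreal (c * (pi * 2 ^ (k - 2)))"
    using c by (simp add: ennreal_mult')
  then show ?thesis
    unfolding KT_eq_integral c_def[symmetric] using c by (simp add: enn2real_leI)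
qed

lemma KT_le_exp:
  assumes k: "k \<ge> 2" and adj: "adj_matrix n x" and nk: "n \<le> k"
  shows "KT k n x \<le> exp (3 * real k ^ 2)"
proof -
  have "real k ^ n \<le> real k ^ k" using k nk by (intro power_increasing) auto
  also have "\<dots> \<le> exp (real k) ^ k"
  proof (rule power_mono)
    show "real k \<le> exp (real k)" using exp_ge_add_one_self[of "real k"] by linarith
  qed simp
  finally have labels: "real k ^ n \<le> exp (real k ^ 2)"
    by (simp add: power2_eq_square flip: exp_of_nat_mult)
  have "(2::real) ^ k = 2 ^ (2 + (k - 2))" by (simp only: le_add_diff_inverse[OF k])
  then have "(2::real) ^ k = 4 * 2 ^ (k - 2)" by (simp add: power_add)
  then have "pi * 2 ^ (k - 2) \<le> (2::real) ^ k" using pi_less_4 by simp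
  also have "\<dots> \<le> exp 1 ^ k" using exp_ge_add_one_self[of 1] by (intro power_mono) auto
  also have "\<dots> \<le> exp (real k ^ 2)"
    using k by (simp add: power2_eq_square flip: exp_of_nat_mult)
  finally have simplex: "pi * 2 ^ (k - 2) \<le> exp (real k ^ 2)" .
  have "KT k n x \<le> real k ^ n * dirichlet_const k * (pi * 2 ^ (k - 2))"
    by (rule KT_le[OF k adj])
  also have "\<dots> \<le> exp (real k ^ 2) * exp (real k ^ 2) * exp (real k ^ 2)"
    using labels simplex dirichlet_const_le_exp[of k] dirichlet_const_nonneg[of k] k
    by (intro mult_mono) auto
  also have "\<dots> = exp (3 * real k ^ 2)" by (simp flip: exp_add)
  finally show ?thesis .
qed

lemma ln_KT_le:
  assumes "k \<ge> 2" and "adj_matrix n x" and "n \<le> k"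
  shows "ln (KT k n x) \<le> 3 * real k ^ 2"
  by (rule ln_le_of_le_exp) (use KT_le_exp[OF assms] in \<open>auto simp: KT_def\<close>)

lemma KT_integrand_1_ge:
  assumes adj: "adj_matrix n x"
  shows "exp (- real (n * n)) / pi * indicator {1/4..3/4} (snd y (1, 1)) \<le> KT_integrand 1 n x y"
proof (cases "snd y (1, 1) \<in> {1/4..3/4}")
  case True
  let ?p = "snd y (1, 1)" and ?\<pi> = "pi_of 1 (fst y)" and ?P = "P_of (snd y)"
  have \<pi>: "?\<pi> 1 = 1" and P: "?P 1 1 = ?p" by (simp_all add: pi_of_def P_of_def)
  have th: "(?\<pi>, ?P) \<in> Theta 1"
    using True \<pi> P by (auto simp: Theta_def)
  define z :: "nat \<Rightarrow> nat" where "z = restrict (\<lambda>_. 1) {0..<n}"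
  have "exp (- real (n * n)) \<le> sbm_joint 1 ?\<pi> ?P n z x"
    using True exp_minus_2_le_quarter by (intro sbm_joint_1_ge[OF adj]) (auto simp: pi_of_def P_of_def)
  also have "\<dots> \<le> sbm_prob 1 ?\<pi> ?P n x"
    unfolding sbm_prob_def
    by (rule member_le_sum) (auto simp: z_def sbm_joint_bounds[OF th adj])
  finally have lik: "exp (- real (n * n)) \<le> sbm_prob 1 ?\<pi> ?P n x" .
  have "1 \<le> ?p powr (-1/2)" using True by (intro one_le_powr_minus_half) auto
  moreover have "1 \<le> (1 - ?p) powr (-1/2)" using True by (intro one_le_powr_minus_half) auto
  ultimately have "1 * 1 \<le> ?p powr (-1/2) * (1 - ?p) powr (-1/2)"
    by (intro mult_mono) auto
  then have prior: "1 / pi \<le> KT_prior 1 ?\<pi> ?P"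
    using True unfolding KT_prior_1[OF th] by (simp add: arcsine_density_def divide_right_mono)
  have "0 \<le> sbm_prob 1 ?\<pi> ?P n x" using lik exp_gt_zero[of "- real (n * n)"] by linarith
  then have "exp (- real (n * n)) * (1 / pi) \<le> sbm_prob 1 ?\<pi> ?P n x * KT_prior 1 ?\<pi> ?P"
    using lik prior by (intro mult_mono) auto
  then show ?thesis using True th by (simp add: KT_integrand_def)
next
  case False
  then show ?thesis using KT_integrand_nonneg[of 1 n x y] adj by simp
qed

lemma borel_measurable_window:
  "(\<lambda>g. indicator {1/4..3/4 :: real} (g (1, 1)) :: ennreal) \<in> borel_measurable (PiM (upper_pairs 1) (\<lambda>_. lborel))"
  unfolding upper_pairs_1 by measurable

lemma nn_integral_KT_measure_1_window:
  "(\<integral>\<^sup>+ y. indicator {1/4..3/4} (snd y (1, 1)) \<partial>KT_measure 1) = ennreal (1/2)"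
proof -
  have "(\<integral>\<^sup>+ y. 1 * indicator {1/4..3/4} (snd y (1, 1)) \<partial>KT_measure 1)
      = (\<integral>\<^sup>+ f. 1 \<partial>PiM {1..<1::nat} (\<lambda>_. lborel :: real measure))
        * (\<integral>\<^sup>+ g. indicator {1/4..3/4 :: real} (g (1, 1)) \<partial>PiM (upper_pairs 1) (\<lambda>_. lborel))"
    unfolding KT_measure_def using borel_measurable_window
    by (intro nn_integral_pair_measure_times lborel_product.sigma_finite finite_upper_pairs) auto
  also have "(\<integral>\<^sup>+ g. indicator {1/4..3/4 :: real} (g (1, 1)) \<partial>PiM (upper_pairs 1) (\<lambda>_. lborel)) = ennreal (1/2)"
    unfolding upper_pairs_1 by (subst lborel_product.product_nn_integral_singleton) auto
  finally show ?thesis by (simp add: space_PiM_empty)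
qed

lemma two_pi_le_exp_3: "2 * pi \<le> exp (3::real)"
proof -
  have "2 \<le> exp (1::real)" using exp_ge_add_one_self[of 1] by simp
  then have "2 ^ 3 \<le> exp (1::real) ^ 3" by (intro power_mono) auto
  then show ?thesis using pi_less_4 by (simp flip: exp_of_nat_mult)
qed

lemma nn_integral_KT_integrand_1_ge:
  assumes "adj_matrix n x"
  shows "exp (- real (n * n) - 3) \<le> (\<integral>\<^sup>+ y. ennreal (KT_integrand 1 n x y) \<partial>KT_measure 1)"
proof -
  let ?c = "exp (- real (n * n)) / pi"
  have "ennreal (?c / 2) = ennreal ?c * (\<integral>\<^sup>+ y. indicator {1/4..3/4} (snd y (1, 1)) \<partial>KT_measure 1)"
    unfolding nn_integral_KT_measure_1_window by (subst ennreal_mult'[symmetric]) auto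
  also have "\<dots> = (\<integral>\<^sup>+ y. ennreal ?c * indicator {1/4..3/4} (snd y (1, 1)) \<partial>KT_measure 1)"
    unfolding KT_measure_def
    by (rule nn_integral_cmult[symmetric], rule measurable_compose[OF measurable_snd borel_measurable_window])
  also have "\<dots> \<le> (\<integral>\<^sup>+ y. ennreal (KT_integrand 1 n x y) \<partial>KT_measure 1)"
  proof (rule nn_integral_mono)
    fix y
    show "ennreal ?c * indicator {1/4..3/4} (snd y (1, 1)) \<le> ennreal (KT_integrand 1 n x y)"
      using KT_integrand_1_ge[OF assms, of y]
      by (cases "snd y (1, 1) \<in> {1/4..3/4}") (auto intro: ennreal_leI)
  qed
  finally have lower: "ennreal (?c / 2) \<le> (\<integral>\<^sup>+ y. ennreal (KT_integrand 1 n x y) \<partial>KT_measure 1)" .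
  have "exp (- real (n * n) - 3) \<le> ?c / 2"
    using two_pi_le_exp_3 by (simp add: exp_diff field_simps)
  with lower show ?thesis by (meson ennreal_leI order_trans)
qed

lemma ln_KT_1_ge:
  assumes "adj_matrix n x"
  shows "- real (n * n) - 3 \<le> ln (KT 1 n x)"
proof (cases "(\<integral>\<^sup>+ y. ennreal (KT_integrand 1 n x y) \<partial>KT_measure 1) = \<infinity>")
  case False
  then have "exp (- real (n * n) - 3) \<le> KT 1 n x"
    using enn2real_mono[OF nn_integral_KT_integrand_1_ge[OF assms]]
    by (simp add: KT_eq_integral top.not_eq_extremum)
  moreover from this have "0 < KT 1 n x" using exp_gt_zero order.strict_trans2 by blast
  ultimately show ?thesis by (simp add: ln_ge_iff)
next
  case True
  \<comment> \<open>then \<open>KT 1 n x = enn2real \<infinity> = 0\<close> and \<open>ln 0 = 0\<close>\<close>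
  have "0 \<le> real (n * n)" by (rule of_nat_0_le_iff)
  with True show ?thesis by (simp add: KT_eq_integral del: of_nat_mult)
qed

lemma pen_ge:
  assumes "k \<ge> 2" "n \<ge> 1" "0 \<le> \<epsilon>"
  shows "real k ^ 2 / 2 * ln (real n) \<le> pen \<epsilon> k n"
proof -
  have "real ((k - 1) * (k - 1 + 2)) + 1 = real k ^ 2"
    using assms(1) by (cases k) (auto simp: power2_eq_square algebra_simps)
  then have "real k ^ 2 / 2 * ln (real n) \<le> (real ((k - 1) * (k - 1 + 2)) + 3 + \<epsilon>) / 2 * ln (real n)"
    using assms by (intro mult_right_mono) auto
  also have "\<dots> \<le> pen \<epsilon> k n"
    unfolding pen_def using assms by (intro member_le_sum) auto
  finally show ?thesis .
qed

lemma KT_crit_less_KT_crit_1: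
  assumes adj: "adj_matrix n x" and "0 \<le> \<epsilon>" and n: "exp 16 \<le> real n" and "n < k"
  shows "KT_crit \<epsilon> n x k < KT_crit \<epsilon> n x 1"
proof -
  have "1 \<le> real n" using n exp_ge_add_one_self[of 16] by linarith
  have "16 \<le> ln (real n)" using ln_mono[OF n] by simp
  have k: "k \<ge> 2" using \<open>n < k\<close> \<open>1 \<le> real n\<close> by simp
  have "real k ^ 2 / 2 * 16 \<le> real k ^ 2 / 2 * ln (real n)"
    using \<open>16 \<le> ln (real n)\<close> by (intro mult_left_mono) auto
  also have "\<dots> \<le> pen \<epsilon> k n"
    using \<open>1 \<le> real n\<close> by (intro pen_ge k \<open>0 \<le> \<epsilon>\<close>) simp
  finally have "KT_crit \<epsilon> n x k \<le> - 5 * real k ^ 2"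
    using ln_KT_le[OF k adj] \<open>n < k\<close> by (simp add: KT_crit_def)
  moreover have "real n ^ 2 < real k ^ 2" using \<open>n < k\<close> by (simp add: power_strict_mono)
  moreover have "4 \<le> real k ^ 2" using power_mono[of 2 "real k" 2] k by simp
  moreover have "- (real n ^ 2) - 3 \<le> KT_crit \<epsilon> n x 1"
    using ln_KT_1_ge[OF adj] by (simp add: KT_crit_def pen_def power2_eq_square)
  ultimately show ?thesis by linarith
qed

lemma eventually_khat_KT_le:
  assumes adj: "\<And>n. adj_matrix n (x n)" and "0 \<le> \<epsilon>"
  shows "eventually (\<lambda>n. \<forall>k. is_khat_KT \<epsilon> n (x n) k \<longrightarrow> \<not> k > n) sequentially"
  using eventually_ge_at_top[of "nat \<lceil>exp 16 :: real\<rceil>"]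
proof (rule eventually_mono)
  fix n assume "nat \<lceil>exp 16 :: real\<rceil> \<le> n"
  then have "exp 16 \<le> real n" by linarith
  then show "\<forall>k. is_khat_KT \<epsilon> n (x n) k \<longrightarrow> \<not> k > n"
    using KT_crit_less_KT_crit_1[OF adj \<open>0 \<le> \<epsilon>\<close>]
    by (auto simp: is_khat_KT_def is_arg_max_def)
qed

theorem lemma3:
  fixes M :: "'w measure" and X :: "nat \<Rightarrow> 'w \<Rightarrow> nat \<Rightarrow> nat \<Rightarrow> bool"
    and k0 :: nat and \<pi>0 :: "nat \<Rightarrow> real" and P0 :: "nat \<Rightarrow> nat \<Rightarrow> real" and \<epsilon> :: real
  assumes "prob_space M"
    and "k0 \<ge> 1"
    and "(\<pi>0, P0) \<in> Theta k0"
    and "sbm_order k0 \<pi>0 P0 = k0"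
    and "\<epsilon> > 0"
    and "\<And>n x. adj_matrix n x \<Longrightarrow>
           {\<omega> \<in> space M. \<forall>i<n. \<forall>j<n. X n \<omega> i j = x i j} \<in> sets M \<and>
           measure M {\<omega> \<in> space M. \<forall>i<n. \<forall>j<n. X n \<omega> i j = x i j} = sbm_prob k0 \<pi>0 P0 n x"
  shows "AE \<omega> in M. eventually (\<lambda>n. \<forall>k. is_khat_KT \<epsilon> n (X n \<omega>) k \<longrightarrow> \<not> (k > n)) sequentially"
proof -
  have "AE \<omega> in M. \<forall>n. adj_matrix n (X n \<omega>)"
    by (rule AE_adj_matrix[OF assms(1,3,6)])
  then show ?thesis
    by (rule eventually_mono) (use eventually_khat_KT_le assms(5) in auto)
qed
end
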